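(* Let $A$ be a T-brace and let $a\in\zeta_2(\star,A)$ be an element of infinite order in $(A,+)$. Suppose that the torsion subgroup of the additive group of $\zeta(\star,A)$ is a $p$-group for some prime $p$. Then $a\star a$ has additive order at most $p$ (i.e. $p(a\star a)=0$).
   Context: A (left) brace is a set $A$ with two operations $+$ and $\cdot$ such that $(A,+)$ is an abelian group, $(A,\cdot)$ is a group, and $a(b+c)=ab+ac-a$ for all $a,b,c\in A$. Put $a\star b=ab-a-b$. A subbrace is a subset which is a subgroup of both $(A,+)$ and $(A,\cdot)$; a subbrace $L$ is an ideal if $a\star z, z\star a\in L$ for all $a\in A$, $z\in L$, and then the quotient brace $A/L$ is defined. $A$ is a T-brace if whenever $I$ is an ideal of $J$ and $J$ is an ideal of $A$, then $I$ is an ideal of $A$. The $\star$-center is $\zeta(\star,A)=\{a: a\star x=x\star a=0\ \forall x\}$; $\zeta_2(\star,A)$ is given by $\zeta_2(\star,A)/\zeta(\star,A)=\zeta(\star,A/\zeta(\star,A))$. *)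

theory Defs
  imports "HOL-Algebra.Algebra"
begin

text \<open>A brace is given by a carrier set A together with two binary operations
  pl (the addition +) and ml (the multiplication), both total functions on the
  ambient type but only relevant on A.\<close>

definition addG :: "'a set \<Rightarrow> ('a \<Rightarrow> 'a \<Rightarrow> 'a) \<Rightarrow> 'a monoid" where
  "addG A pl = \<lparr>carrier = A, monoid.mult = pl,
     one = (THE e. e \<in> A \<and> (\<forall>x\<in>A. pl e x = x \<and> pl x e = x))\<rparr>"

definition mulG :: "'a set \<Rightarrow> ('a \<Rightarrow> 'a \<Rightarrow> 'a) \<Rightarrow> 'a monoid" where
  "mulG A ml = \<lparr>carrier = A, monoid.mult = ml,
     one = (THE e. e \<in> A \<and> (\<forall>x\<in>A. ml e x = x \<and> ml x e = x))\<rparr>"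

definition bzero :: "'a set \<Rightarrow> ('a \<Rightarrow> 'a \<Rightarrow> 'a) \<Rightarrow> 'a" where
  "bzero A pl = \<one>\<^bsub>addG A pl\<^esub>"

definition bneg :: "'a set \<Rightarrow> ('a \<Rightarrow> 'a \<Rightarrow> 'a) \<Rightarrow> 'a \<Rightarrow> 'a" where
  "bneg A pl x = inv\<^bsub>addG A pl\<^esub> x"

definition brace :: "'a set \<Rightarrow> ('a \<Rightarrow> 'a \<Rightarrow> 'a) \<Rightarrow> ('a \<Rightarrow> 'a \<Rightarrow> 'a) \<Rightarrow> bool" where
  "brace A pl ml \<longleftrightarrow> comm_group (addG A pl) \<and> group (mulG A ml) \<and>
     (\<forall>a\<in>A. \<forall>b\<in>A. \<forall>c\<in>A. ml a (pl b c) = pl (pl (ml a b) (ml a c)) (bneg A pl a))"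

definition bstar :: "'a set \<Rightarrow> ('a \<Rightarrow> 'a \<Rightarrow> 'a) \<Rightarrow> ('a \<Rightarrow> 'a \<Rightarrow> 'a) \<Rightarrow> 'a \<Rightarrow> 'a \<Rightarrow> 'a" where
  "bstar A pl ml a b = pl (pl (ml a b) (bneg A pl a)) (bneg A pl b)"

definition subbrace :: "'a set \<Rightarrow> ('a \<Rightarrow> 'a \<Rightarrow> 'a) \<Rightarrow> ('a \<Rightarrow> 'a \<Rightarrow> 'a) \<Rightarrow> 'a set \<Rightarrow> bool" where
  "subbrace A pl ml S \<longleftrightarrow> subgroup S (addG A pl) \<and> subgroup S (mulG A ml)"

definition bideal :: "'a set \<Rightarrow> ('a \<Rightarrow> 'a \<Rightarrow> 'a) \<Rightarrow> ('a \<Rightarrow> 'a \<Rightarrow> 'a) \<Rightarrow> 'a set \<Rightarrow> bool" where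
  "bideal A pl ml L \<longleftrightarrow> subbrace A pl ml L \<and>
     (\<forall>a\<in>A. \<forall>z\<in>L. bstar A pl ml a z \<in> L \<and> bstar A pl ml z a \<in> L)"

definition T_brace :: "'a set \<Rightarrow> ('a \<Rightarrow> 'a \<Rightarrow> 'a) \<Rightarrow> ('a \<Rightarrow> 'a \<Rightarrow> 'a) \<Rightarrow> bool" where
  "T_brace A pl ml \<longleftrightarrow> brace A pl ml \<and>
     (\<forall>I J. bideal A pl ml J \<and> bideal J pl ml I \<longrightarrow> bideal A pl ml I)"

definition zeta_star :: "'a set \<Rightarrow> ('a \<Rightarrow> 'a \<Rightarrow> 'a) \<Rightarrow> ('a \<Rightarrow> 'a \<Rightarrow> 'a) \<Rightarrow> 'a set" where
  "zeta_star A pl ml = {a \<in> A. \<forall>x\<in>A. bstar A pl ml a x = bzero A pl \<and> bstar A pl ml x a = bzero A pl}"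

definition qcarrier :: "'a set \<Rightarrow> ('a \<Rightarrow> 'a \<Rightarrow> 'a) \<Rightarrow> 'a set \<Rightarrow> 'a set set" where
  "qcarrier A pl L = {r_coset (addG A pl) L a | a. a \<in> A}"

definition qadd :: "'a set \<Rightarrow> ('a \<Rightarrow> 'a \<Rightarrow> 'a) \<Rightarrow> 'a set \<Rightarrow> 'a set \<Rightarrow> 'a set \<Rightarrow> 'a set" where
  "qadd A pl L U V = r_coset (addG A pl) L (pl (SOME x. x \<in> U) (SOME y. y \<in> V))"

definition qmul :: "'a set \<Rightarrow> ('a \<Rightarrow> 'a \<Rightarrow> 'a) \<Rightarrow> ('a \<Rightarrow> 'a \<Rightarrow> 'a) \<Rightarrow> 'a set \<Rightarrow> 'a set \<Rightarrow> 'a set \<Rightarrow> 'a set" where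
  "qmul A pl ml L U V = r_coset (addG A pl) L (ml (SOME x. x \<in> U) (SOME y. y \<in> V))"

definition zeta2_star :: "'a set \<Rightarrow> ('a \<Rightarrow> 'a \<Rightarrow> 'a) \<Rightarrow> ('a \<Rightarrow> 'a \<Rightarrow> 'a) \<Rightarrow> 'a set" where
  "zeta2_star A pl ml =
     (let Z = zeta_star A pl ml in
      {a \<in> A. r_coset (addG A pl) Z a \<in>
         zeta_star (qcarrier A pl Z) (qadd A pl Z) (qmul A pl ml Z)})"

end

theory Submission
  imports Defs
begin

text \<open>
  Write \<open>b = a \<star> a\<close>. As \<open>a \<in> \<zeta>\<^sub>2\<close>, both \<open>a \<star> x\<close> and \<open>x \<star> a\<close> lie in \<open>\<zeta> = \<zeta>(\<star>,A)\<close>,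
  and \<open>\<star>\<close> is additive in its right argument and, on \<open>\<zeta>\<^sub>2\<close>, in its left one; hence \<open>b \<in> \<zeta>\<close> and, for
  \<open>c = n a\<close>, \<open>a \<star> c = n b\<close> and \<open>c \<star> c = n\<^sup>2 b\<close>. The subgroup \<open>J = \<zeta> + \<langle>c\<rangle>\<close> is an
  ideal of \<open>A\<close> and \<open>I = \<langle>c\<rangle> + \<langle>c \<star> c\<rangle>\<close> is an ideal of \<open>J\<close>, so in a T-brace \<open>I\<close> is
  an ideal of \<open>A\<close> containing \<open>a \<star> c\<close>: \<open>n b = k n a + l n\<^sup>2 b\<close>. Then
  \<open>n k a = n (1 - n l) b \<in> \<zeta>\<close> is annihilated by \<open>a \<star> -\<close>, so \<open>n k b = 0\<close>,
  \<open>(n k)\<^sup>2 a = 0\<close>, and \<open>k = 0\<close> because \<open>a\<close> has infinite order. Thus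
  \<open>n (1 - n l) b = 0\<close>; for \<open>n = p\<close> the order of the torsion element \<open>b \<in> \<zeta>\<close> is a
  power of \<open>p\<close> dividing \<open>p (1 - p l)\<close>, hence it divides \<open>p\<close>.
\<close>

lemma mulG_eq_addG: "mulG = addG"
  by (intro ext) (simp add: mulG_def addG_def)

lemma one_addG_eqI:
  assumes "e \<in> C" and "\<And>x. x \<in> C \<Longrightarrow> f e x = x \<and> f x e = x"
  shows "\<one>\<^bsub>addG C f\<^esub> = e"
  unfolding addG_def
proof (simp, rule the_equality)
  show "e \<in> C \<and> (\<forall>x\<in>C. f e x = x \<and> f x e = x)" using assms by blast
next
  fix e' assume "e' \<in> C \<and> (\<forall>x\<in>C. f e' x = x \<and> f x e' = x)"
  then show "e' = e" using assms by metis
qed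

lemma addG_subgroup:
  assumes "group (addG A f)" and "subgroup S (addG A f)"
  shows "addG S f = (addG A f)\<lparr>carrier := S\<rparr>"
proof -
  interpret group "addG A f" by fact
  have "x \<in> A \<Longrightarrow> f \<one>\<^bsub>addG A f\<^esub> x = x \<and> f x \<one>\<^bsub>addG A f\<^esub> = x" for x
    using l_one[of x] r_one[of x] by (simp add: addG_def)
  then have "\<one>\<^bsub>addG S f\<^esub> = \<one>\<^bsub>addG A f\<^esub>"
    using subgroup.one_closed[OF assms(2)] subgroup.subset[OF assms(2)]
    by (intro one_addG_eqI) (auto simp: addG_def)
  then show ?thesis by (simp add: addG_def)
qed

lemma (in group) pow_prime_eq_one:
  assumes p: "Factorial_Ring.prime p" and x: "x \<in> carrier G"
    and "x [^] (p ^ j) = \<one>" and "x [^] (int p * m) = \<one>" and "\<not> int p dvd m"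
  shows "x [^] p = \<one>"
proof -
  obtain i where i: "ord x = p ^ i"
    using assms(3) x divides_primepow_nat[OF p] by (auto simp: pow_eq_id)
  have "coprime (int p ^ i) m"
    using assms(5) p by (simp add: prime_imp_coprime prime_nat_iff_prime)
  moreover have "int p ^ i dvd int p * m"
    using assms(4) x i by (simp add: int_pow_eq_id)
  ultimately have "int p ^ i dvd int p"
    using coprime_dvd_mult_left_iff by blast
  then show ?thesis
    using x i by (simp add: pow_eq_id flip: of_nat_power)
qed

subsection \<open>Brace arithmetic\<close>

locale left_brace =
  fixes A :: "'a set" and pl ml :: "'a \<Rightarrow> 'a \<Rightarrow> 'a"
  assumes is_brace: "brace A pl ml"
begin

abbreviation AG where "AG \<equiv> addG A pl"
abbreviation MG where "MG \<equiv> mulG A ml"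
abbreviation add_A (infixl "\<boxplus>" 65) where "x \<boxplus> y \<equiv> x \<otimes>\<^bsub>AG\<^esub> y"
abbreviation mult_A (infixl "\<boxtimes>" 70) where "x \<boxtimes> y \<equiv> x \<otimes>\<^bsub>MG\<^esub> y"
abbreviation neg_A where "neg_A x \<equiv> inv\<^bsub>AG\<^esub> x"
abbreviation zero_A ("\<zero>\<^sub>A") where "\<zero>\<^sub>A \<equiv> \<one>\<^bsub>AG\<^esub>"
abbreviation star_A (infixl "\<star>" 70) where "x \<star> y \<equiv> bstar A pl ml x y"
abbreviation Z where "Z \<equiv> zeta_star A pl ml"

sublocale G: comm_group AG using is_brace by (simp add: brace_def)
sublocale M: group MG using is_brace by (simp add: brace_def)

lemma carrier_AG [simp]: "carrier AG = A" and carrier_MG [simp]: "carrier MG = A"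
  by (simp_all add: addG_def mulG_def)

lemma add_closed [simp]: "x \<in> A \<Longrightarrow> y \<in> A \<Longrightarrow> x \<boxplus> y \<in> A"
  and mult_closed [simp]: "x \<in> A \<Longrightarrow> y \<in> A \<Longrightarrow> x \<boxtimes> y \<in> A"
  and neg_closed [simp]: "x \<in> A \<Longrightarrow> neg_A x \<in> A"
  and mult_inv_closed [simp]: "x \<in> A \<Longrightarrow> inv\<^bsub>MG\<^esub> x \<in> A"
  and zero_closed [simp]: "\<zero>\<^sub>A \<in> A"
  and one_MG_closed [simp]: "\<one>\<^bsub>MG\<^esub> \<in> A"
  and int_pow_closed [simp]: "x \<in> A \<Longrightarrow> x [^]\<^bsub>AG\<^esub> (k::int) \<in> A"
  using G.m_closed M.m_closed G.inv_closed M.inv_closed G.one_closed M.one_closed G.int_pow_closed by simp_all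

lemma pl_eq: "pl x y = x \<boxplus> y" and ml_eq: "ml x y = x \<boxtimes> y"
  by (simp_all add: addG_def mulG_def)

lemma star_def': "x \<star> y = x \<boxtimes> y \<boxplus> neg_A x \<boxplus> neg_A y"
  by (simp add: bstar_def bneg_def pl_eq ml_eq)

lemma star_closed [simp]: "x \<in> A \<Longrightarrow> y \<in> A \<Longrightarrow> x \<star> y \<in> A"
  by (simp add: star_def')

lemma mult_eq_add_star:
  assumes "x \<in> A" and "y \<in> A" shows "x \<boxtimes> y = x \<boxplus> y \<boxplus> x \<star> y"
proof -
  have "x \<star> y = neg_A (x \<boxplus> y) \<boxplus> x \<boxtimes> y"
    using assms by (simp add: star_def' G.inv_mult G.m_ac)
  then show ?thesis
    using assms G.inv_solve_left[of "x \<star> y" "x \<boxplus> y" "x \<boxtimes> y"] by simp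
qed

lemma mult_add_distrib:
  "x \<in> A \<Longrightarrow> y \<in> A \<Longrightarrow> z \<in> A \<Longrightarrow> x \<boxtimes> (y \<boxplus> z) = x \<boxtimes> y \<boxplus> x \<boxtimes> z \<boxplus> neg_A x"
  using is_brace by (simp add: brace_def bneg_def pl_eq ml_eq)

lemma one_MG: "\<one>\<^bsub>MG\<^esub> = \<zero>\<^sub>A"
proof -
  let ?e = "\<one>\<^bsub>MG\<^esub>"
  have "\<zero>\<^sub>A = ?e \<boxtimes> (\<zero>\<^sub>A \<boxplus> \<zero>\<^sub>A)" by simp
  also have "\<dots> = neg_A ?e" using mult_add_distrib[of ?e "\<zero>\<^sub>A" "\<zero>\<^sub>A"] by simp
  finally have "neg_A ?e = \<zero>\<^sub>A" by simp
  then show ?thesis using G.inv_eq_1_iff[of ?e] by simp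
qed

lemma star_add_right:
  assumes "x \<in> A" and "y \<in> A" and "z \<in> A"
  shows "x \<star> (y \<boxplus> z) = x \<star> y \<boxplus> x \<star> z"
  using assms unfolding star_def' mult_add_distrib[OF assms]
  by (simp add: G.inv_mult G.m_ac)

lemma star_mult_left:
  assumes x: "x \<in> A" and y: "y \<in> A" and z: "z \<in> A"
  shows "(x \<boxtimes> y) \<star> z = x \<star> (y \<star> z) \<boxplus> x \<star> z \<boxplus> y \<star> z"
proof -
  let ?s = "x \<boxplus> y \<boxplus> x \<star> y \<boxplus> z"
  have "?s \<boxplus> (x \<boxtimes> y) \<star> z = (x \<boxtimes> y) \<boxtimes> z"
    using assms by (simp add: mult_eq_add_star)
  also have "\<dots> = x \<boxtimes> (y \<boxtimes> z)"
    using assms by (simp add: M.m_assoc)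
  also have "\<dots> = ?s \<boxplus> (x \<star> (y \<star> z) \<boxplus> x \<star> z \<boxplus> y \<star> z)"
    using assms by (simp add: mult_eq_add_star star_add_right G.m_ac)
  finally show ?thesis
    using assms by simp
qed

lemma star_right_hom: "x \<in> A \<Longrightarrow> (\<lambda>y. x \<star> y) \<in> hom AG AG"
  by (rule homI) (simp_all add: star_add_right)

lemma star_zero_right [simp]: "x \<in> A \<Longrightarrow> x \<star> \<zero>\<^sub>A = \<zero>\<^sub>A"
  using group_hom.hom_one[OF group_hom.intro[OF G.is_group G.is_group], OF group_hom_axioms.intro]
    star_right_hom by simp

lemma star_int_pow_right:
  "x \<in> A \<Longrightarrow> y \<in> A \<Longrightarrow> x \<star> (y [^]\<^bsub>AG\<^esub> (k::int)) = (x \<star> y) [^]\<^bsub>AG\<^esub> k"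
  using hom_int_pow[OF star_right_hom] G.is_group by simp

lemma star_neg_right: "x \<in> A \<Longrightarrow> y \<in> A \<Longrightarrow> x \<star> neg_A y = neg_A (x \<star> y)"
  using star_int_pow_right[of x y "-1"] by (simp add: G.int_pow_neg)

lemma star_zero_left [simp]: "x \<in> A \<Longrightarrow> \<zero>\<^sub>A \<star> x = \<zero>\<^sub>A"
  using mult_eq_add_star[of "\<zero>\<^sub>A" x] M.l_one[of x] by (simp add: one_MG)

subsection \<open>The star-centre and the second star-centre\<close>

lemma mem_Z_iff: "z \<in> Z \<longleftrightarrow> z \<in> A \<and> (\<forall>x\<in>A. z \<star> x = \<zero>\<^sub>A \<and> x \<star> z = \<zero>\<^sub>A)"
  by (simp add: zeta_star_def bzero_def)

lemma Z_subset: "Z \<subseteq> A"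
  and Z_star_left: "z \<in> Z \<Longrightarrow> x \<in> A \<Longrightarrow> z \<star> x = \<zero>\<^sub>A"
  and Z_star_right: "z \<in> Z \<Longrightarrow> x \<in> A \<Longrightarrow> x \<star> z = \<zero>\<^sub>A"
  by (auto simp: mem_Z_iff)

lemma mult_Z_left: "z \<in> Z \<Longrightarrow> x \<in> A \<Longrightarrow> z \<boxtimes> x = z \<boxplus> x"
  and mult_Z_right: "z \<in> Z \<Longrightarrow> x \<in> A \<Longrightarrow> x \<boxtimes> z = x \<boxplus> z"
  using Z_subset by (auto simp: mult_eq_add_star Z_star_left Z_star_right)

lemma subgroup_Z: "subgroup Z AG"
proof (rule G.subgroupI)
  show "Z \<subseteq> carrier AG" and "Z \<noteq> {}"
    using Z_subset mem_Z_iff[of "\<zero>\<^sub>A"] by auto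
next
  fix z assume z: "z \<in> Z"
  then have zA: "z \<in> A" using Z_subset by blast
  have "neg_A z \<star> x = \<zero>\<^sub>A \<and> x \<star> neg_A z = \<zero>\<^sub>A" if x: "x \<in> A" for x
  proof
    have "\<zero>\<^sub>A = (z \<boxtimes> neg_A z) \<star> x"
      using z zA x by (simp add: mult_Z_left)
    also have "\<dots> = neg_A z \<star> x"
      using z zA x by (simp add: star_mult_left Z_star_left)
    finally show "neg_A z \<star> x = \<zero>\<^sub>A" by simp
    show "x \<star> neg_A z = \<zero>\<^sub>A"
      using z zA x by (simp add: star_neg_right Z_star_right)
  qed
  then show "neg_A z \<in> Z"
    using zA by (simp add: mem_Z_iff)
next
  fix z w assume z: "z \<in> Z" and w: "w \<in> Z"
  then have zA: "z \<in> A" and wA: "w \<in> A" using Z_subset by auto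
  have "(z \<boxplus> w) \<star> x = \<zero>\<^sub>A \<and> x \<star> (z \<boxplus> w) = \<zero>\<^sub>A" if x: "x \<in> A" for x
    using z w zA wA x mult_Z_left[OF z wA] star_mult_left[OF zA wA x]
    by (simp add: star_add_right Z_star_left Z_star_right)
  then show "z \<boxplus> w \<in> Z"
    using zA wA by (simp add: mem_Z_iff)
qed

lemma Z_add_closed: "z \<in> Z \<Longrightarrow> w \<in> Z \<Longrightarrow> z \<boxplus> w \<in> Z"
  and Z_neg_closed: "z \<in> Z \<Longrightarrow> neg_A z \<in> Z"
  and Z_int_pow_closed: "z \<in> Z \<Longrightarrow> z [^]\<^bsub>AG\<^esub> (k::int) \<in> Z"
  using subgroup_Z by (auto intro: subgroup.m_closed subgroup.m_inv_closed G.subgroup_int_pow_closed)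

text \<open>Representatives of \<open>\<zeta>\<^sub>2(\<star>,A)\<close>, defined without the quotient brace; only the
  inclusion \<open>zeta2_star_subset_Z2\<close> is needed.\<close>

definition Z2 where "Z2 = {c \<in> A. \<forall>x\<in>A. c \<star> x \<in> Z \<and> x \<star> c \<in> Z}"

lemma Z2_subset: "Z2 \<subseteq> A"
  and Z2_star_left: "c \<in> Z2 \<Longrightarrow> x \<in> A \<Longrightarrow> c \<star> x \<in> Z"
  and Z2_star_right: "c \<in> Z2 \<Longrightarrow> x \<in> A \<Longrightarrow> x \<star> c \<in> Z"
  by (auto simp: Z2_def)

lemma Z_subset_Z2: "Z \<subseteq> Z2"
  using Z_subset subgroup.one_closed[OF subgroup_Z]
  by (auto simp: Z2_def Z_star_left Z_star_right)

lemma star_add_left_Z2: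
  assumes c: "c \<in> Z2" and d: "d \<in> A" and x: "x \<in> A"
  shows "(c \<boxplus> d) \<star> x = c \<star> (d \<star> x) \<boxplus> c \<star> x \<boxplus> d \<star> x"
proof -
  have cA: "c \<in> A" using c Z2_subset by blast
  define w where "w = neg_A (c \<star> d)"
  have w: "w \<in> Z" and wA: "w \<in> A"
    unfolding w_def using Z2_star_left[OF c d] Z_neg_closed Z_subset by auto
  have "c \<boxtimes> (d \<boxplus> w) = c \<boxplus> (d \<boxplus> w) \<boxplus> (c \<star> d \<boxplus> c \<star> w)"
    using cA d wA by (simp add: mult_eq_add_star star_add_right)
  also have "\<dots> = c \<boxplus> d \<boxplus> (w \<boxplus> c \<star> d)"
    using cA d wA by (simp add: Z_star_right[OF w cA] G.m_assoc)
  also have "\<dots> = c \<boxplus> d"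
    using cA d by (simp add: w_def)
  finally have cd: "c \<boxplus> d = c \<boxtimes> (d \<boxplus> w)" ..
  have "(d \<boxplus> w) \<star> x = d \<star> x"
    using d wA x by (simp add: mult_Z_right[OF w d, symmetric] star_mult_left Z_star_left[OF w])
  then show ?thesis
    using cA d wA x by (simp add: cd star_mult_left)
qed

lemma star_add_left_Z2_Z2:
  assumes c: "c \<in> Z2" and d: "d \<in> Z2" and x: "x \<in> A"
  shows "(c \<boxplus> d) \<star> x = c \<star> x \<boxplus> d \<star> x"
proof -
  have "d \<in> A" using d Z2_subset by blast
  then show ?thesis
    using star_add_left_Z2[OF c _ x] Z_star_right[OF Z2_star_left[OF d x]] c Z2_subset x by auto
qed

lemma subgroup_Z2: "subgroup Z2 AG"
proof (rule G.subgroupI)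
  show "Z2 \<subseteq> carrier AG" and "Z2 \<noteq> {}"
    using Z2_subset Z_subset_Z2 subgroup.one_closed[OF subgroup_Z] by auto
next
  fix c assume c: "c \<in> Z2"
  then have cA: "c \<in> A" using Z2_subset by blast
  have "neg_A c \<star> x \<in> Z" if x: "x \<in> A" for x
  proof -
    define w where "w = neg_A c \<star> x"
    define s where "s = c \<star> w \<boxplus> c \<star> x"
    have wA: "w \<in> A" using cA x w_def by simp
    have sZ: "s \<in> Z" using Z2_star_left[OF c] wA x by (simp add: s_def Z_add_closed)
    have "s \<boxplus> w = (c \<boxplus> neg_A c) \<star> x"
      unfolding s_def w_def by (rule star_add_left_Z2[OF c _ x, symmetric]) (simp add: cA)
    also have "\<dots> = \<zero>\<^sub>A" using cA x by simp
    finally have "neg_A s = w"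
      using sZ Z_subset wA by (intro G.comm_inv_char) auto
    then show ?thesis
      using Z_neg_closed[OF sZ] by (simp add: w_def)
  qed
  moreover have "x \<star> neg_A c \<in> Z" if x: "x \<in> A" for x
    using Z2_star_right[OF c x] x cA by (simp add: star_neg_right Z_neg_closed)
  ultimately show "neg_A c \<in> Z2"
    using cA by (simp add: Z2_def)
next
  fix c d assume c: "c \<in> Z2" and d: "d \<in> Z2"
  then have cA: "c \<in> A" and dA: "d \<in> A" using Z2_subset by auto
  have "(c \<boxplus> d) \<star> x \<in> Z \<and> x \<star> (c \<boxplus> d) \<in> Z" if x: "x \<in> A" for x
    using c d x cA dA Z2_star_left Z2_star_right
    by (simp add: star_add_left_Z2_Z2 star_add_right Z_add_closed)
  then show "c \<boxplus> d \<in> Z2"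
    using cA dA by (simp add: Z2_def)
qed

lemma star_int_pow_left:
  assumes c: "c \<in> Z2" and x: "x \<in> A"
  shows "(c [^]\<^bsub>AG\<^esub> (k::int)) \<star> x = (c \<star> x) [^]\<^bsub>AG\<^esub> k"
proof -
  have "(\<lambda>c. c \<star> x) \<in> hom (AG\<lparr>carrier := Z2\<rparr>) AG"
    using x Z2_subset by (intro homI) (auto simp: star_add_left_Z2_Z2)
  then show ?thesis
    using hom_int_pow[of _ "AG\<lparr>carrier := Z2\<rparr>" AG c k] c G.is_group
      G.subgroup_imp_group[OF subgroup_Z2] G.int_pow_consistent[OF subgroup_Z2 c]
    by simp
qed

subsection \<open>Ideals\<close>

lemma mult_subgroupI:
  assumes S: "subgroup S AG" and star: "\<And>s x. s \<in> S \<Longrightarrow> x \<in> A \<Longrightarrow> s \<star> x \<in> S"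
  shows "subgroup S MG"
proof (rule M.subgroupI)
  show "S \<subseteq> carrier MG" and "S \<noteq> {}"
    using subgroup.subset[OF S] subgroup.one_closed[OF S] by auto
next
  fix u assume u: "u \<in> S"
  define v where "v = inv\<^bsub>MG\<^esub> u"
  have uA: "u \<in> A" and vA: "v \<in> A"
    using subgroup.mem_carrier[OF S u] by (simp_all add: v_def)
  have "u \<boxplus> u \<star> v \<boxplus> v = u \<boxtimes> v"
    using uA vA by (simp add: mult_eq_add_star G.m_ac)
  also have "\<dots> = \<zero>\<^sub>A"
    using uA by (simp add: v_def one_MG)
  finally have "neg_A (u \<boxplus> u \<star> v) = v"
    using uA vA by (intro G.comm_inv_char) auto
  moreover have "u \<boxplus> u \<star> v \<in> S"
    using u star[OF u vA] S by (simp add: subgroup.m_closed)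
  ultimately show "inv\<^bsub>MG\<^esub> u \<in> S"
    using S by (metis subgroup.m_inv_closed v_def)
next
  fix u v assume "u \<in> S" and "v \<in> S"
  then show "u \<boxtimes> v \<in> S"
    using S star subgroup.mem_carrier[OF S]
    by (auto simp: mult_eq_add_star subgroup.m_closed)
qed

lemma bidealI:
  assumes "subgroup L AG" and "\<And>x z. x \<in> A \<Longrightarrow> z \<in> L \<Longrightarrow> x \<star> z \<in> L \<and> z \<star> x \<in> L"
  shows "bideal A pl ml L"
  using assms mult_subgroupI by (auto simp: bideal_def subbrace_def)

lemma bideal_between_Z_Z2:
  assumes "subgroup S AG" and "Z \<subseteq> S" and "S \<subseteq> Z2"
  shows "bideal A pl ml S"
  using assms Z2_star_left Z2_star_right by (intro bidealI) blast+

lemma addG_subbrace: "subgroup J AG \<Longrightarrow> addG J pl = AG\<lparr>carrier := J\<rparr>"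
  using addG_subgroup G.is_group by blast

lemma bstar_subbrace:
  assumes "subgroup J AG" and "x \<in> J" and "y \<in> J"
  shows "bstar J pl ml x y = x \<star> y"
  using assms G.m_inv_consistent by (simp add: bstar_def bneg_def addG_subbrace)

lemma brace_subbrace:
  assumes "subbrace A pl ml J"
  shows "brace J pl ml"
proof -
  have JG: "subgroup J AG" and JM: "subgroup J MG"
    using assms by (simp_all add: subbrace_def)
  have "comm_group (addG J pl)"
    unfolding addG_subbrace[OF JG]
    using G.subgroup_imp_group[OF JG] subgroup.mem_carrier[OF JG]
    by (intro group.group_comm_groupI) (auto simp: G.m_comm)
  moreover have "group (mulG J ml)"
    using addG_subgroup[OF M.is_group[unfolded mulG_eq_addG]] JM M.subgroup_imp_group
    by (simp add: mulG_eq_addG)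
  moreover have "bneg J pl x = bneg A pl x" if "x \<in> J" for x
    using that JG G.m_inv_consistent by (simp add: bneg_def addG_subbrace)
  ultimately show ?thesis
    using is_brace subgroup.subset[OF JG] by (auto simp: brace_def subsetD)
qed

lemma bideal_subbraceI:
  assumes J: "subbrace A pl ml J" and I: "subgroup I AG" "I \<subseteq> J"
    and star: "\<And>x i. x \<in> J \<Longrightarrow> i \<in> I \<Longrightarrow> x \<star> i \<in> I \<and> i \<star> x \<in> I"
  shows "bideal J pl ml I"
proof -
  have JG: "subgroup J AG" using J by (simp add: subbrace_def)
  interpret J: left_brace J pl ml
    using brace_subbrace[OF J] by unfold_locales
  show ?thesis
  proof (rule J.bidealI)
    show "subgroup I (addG J pl)"
      unfolding addG_subbrace[OF JG] using G.subgroup_incl[OF I(1) JG I(2)] .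
    show "bstar J pl ml x i \<in> I \<and> bstar J pl ml i x \<in> I" if "x \<in> J" "i \<in> I" for x i
      using that star I(2) bstar_subbrace[OF JG] by auto
  qed
qed

subsection \<open>The quotient by the star-centre\<close>

abbreviation zcoset :: "'a \<Rightarrow> 'a set" where "zcoset u \<equiv> Z #>\<^bsub>AG\<^esub> u"

lemma zcoset_add_Z: "z \<in> Z \<Longrightarrow> u \<in> A \<Longrightarrow> zcoset (z \<boxplus> u) = zcoset u"
  using G.coset_mult_assoc[of Z z u] G.coset_join2[of z Z] subgroup_Z Z_subset by auto

lemma zcoset_eq_Z_iff: "u \<in> A \<Longrightarrow> zcoset u = Z \<longleftrightarrow> u \<in> Z"
  using G.coset_join1[of Z u] G.coset_join2[of u Z] subgroup_Z by auto

lemma some_zcoset: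
  assumes "u \<in> A" obtains z where "z \<in> Z" and "(SOME x. x \<in> zcoset u) = z \<boxplus> u"
proof -
  have "u \<in> zcoset u" using assms G.rcos_self subgroup_Z by simp
  then have "(SOME x. x \<in> zcoset u) \<in> zcoset u" by (rule someI)
  then show ?thesis using that by (auto simp: r_coset_def)
qed

lemma mult_Z_commute: "z \<in> Z \<Longrightarrow> x \<in> A \<Longrightarrow> x \<boxtimes> z = z \<boxtimes> x"
  using Z_subset by (auto simp: mult_Z_left mult_Z_right G.m_comm)

lemma qadd_zcoset:
  assumes u: "u \<in> A" and v: "v \<in> A"
  shows "qadd A pl Z (zcoset u) (zcoset v) = zcoset (u \<boxplus> v)"
proof -
  obtain z w where z: "z \<in> Z" "(SOME x. x \<in> zcoset u) = z \<boxplus> u"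
    and w: "w \<in> Z" "(SOME x. x \<in> zcoset v) = w \<boxplus> v"
    using some_zcoset u v by metis
  have "z \<in> A" and "w \<in> A" using z w Z_subset by auto
  then have "qadd A pl Z (zcoset u) (zcoset v) = zcoset ((z \<boxplus> w) \<boxplus> (u \<boxplus> v))"
    using z w u v by (simp add: qadd_def pl_eq G.m_ac)
  also have "\<dots> = zcoset (u \<boxplus> v)"
    using z w u v by (simp add: zcoset_add_Z Z_add_closed)
  finally show ?thesis .
qed

lemma qmul_zcoset:
  assumes u: "u \<in> A" and v: "v \<in> A"
  shows "qmul A pl ml Z (zcoset u) (zcoset v) = zcoset (u \<boxtimes> v)"
proof -
  obtain z w where z: "z \<in> Z" "(SOME x. x \<in> zcoset u) = z \<boxplus> u"
    and w: "w \<in> Z" "(SOME x. x \<in> zcoset v) = w \<boxplus> v"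
    using some_zcoset u v by metis
  have zA: "z \<in> A" and wA: "w \<in> A" using z w Z_subset by auto
  have "(z \<boxplus> u) \<boxtimes> (w \<boxplus> v) = z \<boxtimes> (u \<boxtimes> w) \<boxtimes> v"
    using zA wA u v
    by (simp add: mult_Z_left[OF z(1) u, symmetric] mult_Z_left[OF w(1) v, symmetric] M.m_assoc)
  also have "\<dots> = (z \<boxtimes> w) \<boxtimes> (u \<boxtimes> v)"
    using zA wA u v by (simp add: mult_Z_commute[OF w(1) u] M.m_assoc)
  also have "\<dots> = (z \<boxplus> w) \<boxplus> u \<boxtimes> v"
    using z w wA u v by (simp add: mult_Z_left Z_add_closed)
  finally have "qmul A pl ml Z (zcoset u) (zcoset v) = zcoset ((z \<boxplus> w) \<boxplus> u \<boxtimes> v)"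
    using z w by (simp add: qmul_def ml_eq)
  also have "\<dots> = zcoset (u \<boxtimes> v)"
    using z w u v by (simp add: zcoset_add_Z Z_add_closed)
  finally show ?thesis .
qed

abbreviation QG where "QG \<equiv> addG (qcarrier A pl Z) (qadd A pl Z)"

lemma carrier_QG: "carrier QG = {zcoset u | u. u \<in> A}"
  and mult_QG: "U \<otimes>\<^bsub>QG\<^esub> V = qadd A pl Z U V"
  by (simp_all add: addG_def qcarrier_def)

lemma zcoset_zero: "zcoset \<zero>\<^sub>A = Z"
  using Z_subset by simp

lemma one_QG: "\<one>\<^bsub>QG\<^esub> = zcoset \<zero>\<^sub>A"
proof (rule one_addG_eqI)
  show "zcoset \<zero>\<^sub>A \<in> qcarrier A pl Z" by (auto simp: qcarrier_def)
next
  fix U assume "U \<in> qcarrier A pl Z"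
  then show "qadd A pl Z (zcoset \<zero>\<^sub>A) U = U \<and> qadd A pl Z U (zcoset \<zero>\<^sub>A) = U"
    by (auto simp: qcarrier_def qadd_zcoset simp del: G.coset_mult_one)
qed

lemma monoid_QG: "monoid QG"
  by (rule monoidI)
    (auto simp: carrier_QG mult_QG one_QG qadd_zcoset G.m_assoc
      simp del: G.coset_mult_one)

lemma bneg_zcoset: "u \<in> A \<Longrightarrow> bneg (qcarrier A pl Z) (qadd A pl Z) (zcoset u) = zcoset (neg_A u)"
  unfolding bneg_def
  by (rule monoid.inv_unique'[OF monoid_QG, symmetric])
    (auto simp: carrier_QG mult_QG one_QG qadd_zcoset
      simp del: G.coset_mult_one)

lemma bstar_zcoset:
  assumes "u \<in> A" and "v \<in> A"
  shows "bstar (qcarrier A pl Z) (qadd A pl Z) (qmul A pl ml Z) (zcoset u) (zcoset v) = zcoset (u \<star> v)"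
proof -
  have "bstar (qcarrier A pl Z) (qadd A pl Z) (qmul A pl ml Z) (zcoset u) (zcoset v)
      = zcoset (u \<boxtimes> v \<boxplus> neg_A u \<boxplus> neg_A v)"
    unfolding bstar_def[of "qcarrier A pl Z"]
    using assms by (simp add: bneg_zcoset qmul_zcoset qadd_zcoset)
  then show ?thesis by (simp add: star_def')
qed

lemma zeta2_star_subset_Z2: "zeta2_star A pl ml \<subseteq> Z2"
proof
  fix a assume "a \<in> zeta2_star A pl ml"
  then have a: "a \<in> A"
    and aZ: "zcoset a \<in> zeta_star (qcarrier A pl Z) (qadd A pl Z) (qmul A pl ml Z)"
    by (simp_all add: zeta2_star_def Let_def)
  have "zcoset (a \<star> x) = Z \<and> zcoset (x \<star> a) = Z" if x: "x \<in> A" for x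
  proof -
    have "zcoset x \<in> qcarrier A pl Z" using x by (auto simp: qcarrier_def)
    moreover have "bzero (qcarrier A pl Z) (qadd A pl Z) = Z"
      by (simp add: bzero_def one_QG zcoset_zero)
    ultimately show ?thesis
      using aZ a x bstar_zcoset[of a x] bstar_zcoset[of x a]
      unfolding zeta_star_def[of "qcarrier A pl Z"] by auto
  qed
  then show "a \<in> Z2"
    using a by (simp add: Z2_def zcoset_eq_Z_iff)
qed

subsection \<open>The ideals \<open>\<zeta> + \<langle>c\<rangle>\<close> and \<open>\<langle>c\<rangle> + \<langle>c \<star> c\<rangle>\<close>\<close>

abbreviation cyc :: "'a \<Rightarrow> 'a set" where "cyc x \<equiv> generate AG {x}"

lemma mem_cyc: "c \<in> A \<Longrightarrow> y \<in> cyc c \<longleftrightarrow> (\<exists>k::int. y = c [^]\<^bsub>AG\<^esub> k)"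
  by (simp add: G.generate_pow)

lemma mem_set_mult_cyc:
  "c \<in> A \<Longrightarrow> y \<in> H <#>\<^bsub>AG\<^esub> cyc c \<longleftrightarrow> (\<exists>h\<in>H. \<exists>k::int. y = h \<boxplus> c [^]\<^bsub>AG\<^esub> k)"
  by (auto simp: set_mult_def G.generate_pow)

lemma subgroup_set_mult_cyc: "subgroup H AG \<Longrightarrow> c \<in> A \<Longrightarrow> subgroup (H <#>\<^bsub>AG\<^esub> cyc c) AG"
  by (simp add: G.mult_subgroups G.generate_is_subgroup)

lemma bideal_Z_cyc:
  assumes c: "c \<in> Z2"
  shows "bideal A pl ml (Z <#>\<^bsub>AG\<^esub> cyc c)"
proof (rule bideal_between_Z_Z2)
  have cA: "c \<in> A" using c Z2_subset by blast
  then show "subgroup (Z <#>\<^bsub>AG\<^esub> cyc c) AG"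
    by (simp add: subgroup_set_mult_cyc subgroup_Z)
  show "Z \<subseteq> Z <#>\<^bsub>AG\<^esub> cyc c"
  proof
    fix z assume "z \<in> Z"
    moreover have "z = z \<boxplus> c [^]\<^bsub>AG\<^esub> (0::int)"
      using \<open>z \<in> Z\<close> Z_subset by auto
    ultimately show "z \<in> Z <#>\<^bsub>AG\<^esub> cyc c"
      unfolding mem_set_mult_cyc[OF cA] by blast
  qed
  show "Z <#>\<^bsub>AG\<^esub> cyc c \<subseteq> Z2"
    using cA Z_subset_Z2 G.subgroup_int_pow_closed[OF subgroup_Z2 c]
    by (auto simp: mem_set_mult_cyc intro!: subgroup.m_closed[OF subgroup_Z2])
qed

lemma star_Z_cyc:
  assumes c: "c \<in> Z2" and z: "z \<in> Z"
  shows "(z \<boxplus> c [^]\<^bsub>AG\<^esub> (k::int)) \<star> c = (c \<star> c) [^]\<^bsub>AG\<^esub> k"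
    and "c \<star> (z \<boxplus> c [^]\<^bsub>AG\<^esub> k) = (c \<star> c) [^]\<^bsub>AG\<^esub> k"
proof -
  have cA: "c \<in> A" and zA: "z \<in> A" using c z Z2_subset Z_subset by auto
  have "c [^]\<^bsub>AG\<^esub> k \<in> Z2" using G.subgroup_int_pow_closed[OF subgroup_Z2 c] .
  then show "(z \<boxplus> c [^]\<^bsub>AG\<^esub> k) \<star> c = (c \<star> c) [^]\<^bsub>AG\<^esub> k"
    using c z cA zA Z_subset_Z2
    by (auto simp: star_add_left_Z2_Z2 star_int_pow_left Z_star_left)
  show "c \<star> (z \<boxplus> c [^]\<^bsub>AG\<^esub> k) = (c \<star> c) [^]\<^bsub>AG\<^esub> k"
    using z cA zA by (simp add: star_add_right star_int_pow_right Z_star_right)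
qed

lemma star_set_mult_cyc_mem_cyc:
  assumes c: "c \<in> Z2" and "x \<in> Z <#>\<^bsub>AG\<^esub> cyc c" and "i \<in> cyc c <#>\<^bsub>AG\<^esub> cyc (c \<star> c)"
  shows "x \<star> i \<in> cyc (c \<star> c) \<and> i \<star> x \<in> cyc (c \<star> c)"
proof -
  let ?d = "c \<star> c"
  have cA: "c \<in> A" using c Z2_subset by blast
  have d: "?d \<in> Z" and dA: "?d \<in> A" using Z2_star_left[OF c cA] Z_subset by auto
  obtain z k m l where z: "z \<in> Z" and x: "x = z \<boxplus> c [^]\<^bsub>AG\<^esub> (k::int)"
    and i: "i = c [^]\<^bsub>AG\<^esub> (m::int) \<boxplus> ?d [^]\<^bsub>AG\<^esub> (l::int)"
    using assms cA dA by (auto simp: mem_set_mult_cyc mem_cyc)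
  have xA: "x \<in> A" using x z Z_subset cA by auto
  have dl: "?d [^]\<^bsub>AG\<^esub> l \<in> Z" using Z_int_pow_closed[OF d] .
  have cm: "c [^]\<^bsub>AG\<^esub> m \<in> Z2" using G.subgroup_int_pow_closed[OF subgroup_Z2 c] .
  have xc: "x \<star> c = ?d [^]\<^bsub>AG\<^esub> k" and cx: "c \<star> x = ?d [^]\<^bsub>AG\<^esub> k"
    unfolding x using star_Z_cyc[OF c z] by simp_all
  have "x \<star> i = x \<star> c [^]\<^bsub>AG\<^esub> m \<boxplus> x \<star> ?d [^]\<^bsub>AG\<^esub> l"
    unfolding i using xA cA dA by (simp add: star_add_right)
  also have "\<dots> = (?d [^]\<^bsub>AG\<^esub> k) [^]\<^bsub>AG\<^esub> m"
    using xA cA dA Z_star_right[OF dl xA] by (simp add: star_int_pow_right xc)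
  finally have "x \<star> i = (?d [^]\<^bsub>AG\<^esub> k) [^]\<^bsub>AG\<^esub> m" .
  moreover have "i \<star> x = c [^]\<^bsub>AG\<^esub> m \<star> x \<boxplus> ?d [^]\<^bsub>AG\<^esub> l \<star> x"
    unfolding i using dl Z_subset_Z2 by (intro star_add_left_Z2_Z2[OF cm _ xA]) blast
  moreover have "\<dots> = (?d [^]\<^bsub>AG\<^esub> k) [^]\<^bsub>AG\<^esub> m"
    using xA dA Z_star_left[OF dl xA] by (simp add: star_int_pow_left[OF c] cx)
  ultimately show ?thesis
    using G.int_pow_pow[of ?d k m] dA by (auto simp: mem_cyc)
qed

lemma bideal_cyc_cyc:
  assumes c: "c \<in> Z2"
  shows "bideal (Z <#>\<^bsub>AG\<^esub> cyc c) pl ml (cyc c <#>\<^bsub>AG\<^esub> cyc (c \<star> c))"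
proof (rule bideal_subbraceI)
  let ?d = "c \<star> c" and ?J = "Z <#>\<^bsub>AG\<^esub> cyc c" and ?I = "cyc c <#>\<^bsub>AG\<^esub> cyc (c \<star> c)"
  have cA: "c \<in> A" using c Z2_subset by blast
  have dA: "?d \<in> A" using cA by simp
  show "subbrace A pl ml ?J" using bideal_Z_cyc[OF c] by (simp add: bideal_def)
  show "subgroup ?I AG"
    using cA dA by (simp add: subgroup_set_mult_cyc G.generate_is_subgroup)
  show "?I \<subseteq> ?J"
  proof
    fix i assume "i \<in> ?I"
    then obtain m l where "i = c [^]\<^bsub>AG\<^esub> (m::int) \<boxplus> ?d [^]\<^bsub>AG\<^esub> (l::int)"
      using cA dA by (auto simp: mem_set_mult_cyc mem_cyc)
    then have "i = ?d [^]\<^bsub>AG\<^esub> l \<boxplus> c [^]\<^bsub>AG\<^esub> m"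
      using G.m_comm[of "c [^]\<^bsub>AG\<^esub> m" "?d [^]\<^bsub>AG\<^esub> l"] cA dA by simp
    then show "i \<in> ?J"
      using Z_int_pow_closed[OF Z2_star_left[OF c cA]] unfolding mem_set_mult_cyc[OF cA]
      by (intro bexI exI)
  qed
  have "cyc ?d \<subseteq> ?I"
  proof
    fix y assume "y \<in> cyc ?d"
    moreover have "y = \<zero>\<^sub>A \<boxplus> y" using \<open>y \<in> cyc ?d\<close> dA by (auto simp: mem_cyc)
    ultimately show "y \<in> ?I"
      using generate.one[of AG "{c}"] unfolding mem_set_mult_cyc[OF dA] mem_cyc[OF dA] by blast
  qed
  then show "x \<star> i \<in> ?I \<and> i \<star> x \<in> ?I" if "x \<in> ?J" and "i \<in> ?I" for x i
    using star_set_mult_cyc_mem_cyc[OF c that] by blast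
qed

lemma T_brace_star_mem_cyc_cyc:
  assumes T: "T_brace A pl ml" and c: "c \<in> Z2" and x: "x \<in> A"
  shows "x \<star> c \<in> cyc c <#>\<^bsub>AG\<^esub> cyc (c \<star> c)"
proof -
  have cA: "c \<in> A" using c Z2_subset by blast
  have "bideal A pl ml (cyc c <#>\<^bsub>AG\<^esub> cyc (c \<star> c))"
    using T bideal_Z_cyc[OF c] bideal_cyc_cyc[OF c] by (auto simp: T_brace_def)
  moreover have "c \<in> cyc c <#>\<^bsub>AG\<^esub> cyc (c \<star> c)"
  proof -
    have "c = c \<boxplus> (c \<star> c) [^]\<^bsub>AG\<^esub> (0::int)" using cA by simp
    then show ?thesis
      using generate.incl[of c "{c}" AG]
      unfolding mem_set_mult_cyc[OF star_closed[OF cA cA]] by blast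
  qed
  ultimately show ?thesis
    using x by (simp add: bideal_def)
qed

lemma Z2_int_pow_eq_star_pow_imp_zero:
  assumes a: "a \<in> Z2" and ord: "G.ord a = 0"
    and eq: "a [^]\<^bsub>AG\<^esub> (n::int) = (a \<star> a) [^]\<^bsub>AG\<^esub> (t::int)"
  shows "n = 0"
proof -
  let ?b = "a \<star> a"
  have aA: "a \<in> A" using a Z2_subset by blast
  have b: "?b \<in> Z" and bA: "?b \<in> A" using Z2_star_left[OF a aA] Z_subset by auto
  have "?b [^]\<^bsub>AG\<^esub> n = a \<star> a [^]\<^bsub>AG\<^esub> n"
    using aA by (simp add: star_int_pow_right)
  also have "\<dots> = \<zero>\<^sub>A"
    using eq Z_star_right[OF Z_int_pow_closed[OF b] aA] by simp
  finally have bn: "?b [^]\<^bsub>AG\<^esub> n = \<zero>\<^sub>A" .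
  have "a [^]\<^bsub>AG\<^esub> (n * n) = (a [^]\<^bsub>AG\<^esub> n) [^]\<^bsub>AG\<^esub> n"
    using aA by (simp add: G.int_pow_pow)
  also have "\<dots> = (?b [^]\<^bsub>AG\<^esub> t) [^]\<^bsub>AG\<^esub> n"
    by (simp only: eq)
  also have "\<dots> = (?b [^]\<^bsub>AG\<^esub> n) [^]\<^bsub>AG\<^esub> t"
    using bA by (simp add: G.int_pow_pow mult.commute)
  finally have "a [^]\<^bsub>AG\<^esub> (n * n) = \<zero>\<^sub>A"
    using bn by simp
  then show ?thesis
    using aA ord by (simp add: G.int_pow_eq_id)
qed

lemma T_brace_star_self_int_pow_eq_zero:
  assumes T: "T_brace A pl ml" and a: "a \<in> Z2" and ord: "G.ord a = 0"
  obtains l where "(a \<star> a) [^]\<^bsub>AG\<^esub> (n * (1 - n * l) :: int) = \<zero>\<^sub>A"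
proof -
  let ?b = "a \<star> a" and ?c = "a [^]\<^bsub>AG\<^esub> n"
  have aA: "a \<in> A" using a Z2_subset by blast
  have bA: "?b \<in> A" using aA by simp
  have c: "?c \<in> Z2" using G.subgroup_int_pow_closed[OF subgroup_Z2 a] .
  have ac: "a \<star> ?c = ?b [^]\<^bsub>AG\<^esub> n"
    using aA by (simp add: star_int_pow_right)
  have cc: "?c \<star> ?c = ?b [^]\<^bsub>AG\<^esub> (n * n)"
    using aA bA by (simp add: star_int_pow_left[OF a] ac G.int_pow_pow)
  obtain k l where "?b [^]\<^bsub>AG\<^esub> n = ?c [^]\<^bsub>AG\<^esub> (k::int) \<boxplus> (?c \<star> ?c) [^]\<^bsub>AG\<^esub> (l::int)"
    using T_brace_star_mem_cyc_cyc[OF T c aA] aA by (auto simp: ac mem_set_mult_cyc mem_cyc)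
  then have "?b [^]\<^bsub>AG\<^esub> n = a [^]\<^bsub>AG\<^esub> (n * k) \<boxplus> ?b [^]\<^bsub>AG\<^esub> (n * n * l)"
    using aA bA by (simp add: cc G.int_pow_pow)
  then have nk: "a [^]\<^bsub>AG\<^esub> (n * k) = ?b [^]\<^bsub>AG\<^esub> (n - n * n * l)"
    using aA bA by (simp add: G.int_pow_diff G.inv_solve_right)
  then have "n * k = 0"
    using Z2_int_pow_eq_star_pow_imp_zero[OF a ord] by blast
  then have "?b [^]\<^bsub>AG\<^esub> (n - n * n * l) = \<zero>\<^sub>A"
    using nk by (metis int_pow_0)
  then show ?thesis
    using that[of l] by (simp add: algebra_simps)
qed

end

theorem lemma4p5:
  fixes A :: "'a set" and pl ml :: "'a \<Rightarrow> 'a \<Rightarrow> 'a" and a :: 'a and p :: nat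
  assumes "T_brace A pl ml"
    and "a \<in> zeta2_star A pl ml"
    and "\<forall>n::nat. n > 0 \<longrightarrow> a [^]\<^bsub>addG A pl\<^esub> n \<noteq> bzero A pl"
    and "Factorial_Ring.prime p"
    and "\<forall>x \<in> zeta_star A pl ml. (\<exists>n::nat. n > 0 \<and> x [^]\<^bsub>addG A pl\<^esub> n = bzero A pl)
           \<longrightarrow> (\<exists>k::nat. x [^]\<^bsub>addG A pl\<^esub> (p ^ k) = bzero A pl)"
  shows "(bstar A pl ml a a) [^]\<^bsub>addG A pl\<^esub> p = bzero A pl"
proof -
  interpret left_brace A pl ml
    using assms(1) by unfold_locales (simp add: T_brace_def)
  let ?b = "a \<star> a"
  have a: "a \<in> Z2" using assms(2) zeta2_star_subset_Z2 by blast
  have aA: "a \<in> A" using a Z2_subset by blast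
  have b: "?b \<in> Z" and bA: "?b \<in> A" using Z2_star_left[OF a aA] Z_subset by auto
  have "G.ord a = 0" using assms(3) aA by (simp add: G.ord_eq_0 bzero_def)
  then obtain l where bl: "?b [^]\<^bsub>AG\<^esub> (int p * (1 - int p * l)) = \<zero>\<^sub>A"
    using T_brace_star_self_int_pow_eq_zero[OF assms(1) a] by blast
  have not_dvd: "\<not> int p dvd 1 - int p * l"
    using assms(4) by (metis dvd_triv_left not_prime_unit prime_nat_int_transfer zdvd_zdiffD)
  have "int p * (1 - int p * l) \<noteq> 0"
    using not_dvd prime_gt_0_nat[OF assms(4)] by auto
  then have "G.ord ?b \<noteq> 0"
    using bl bA by (auto simp: G.int_pow_eq_id)
  then have "\<exists>n::nat. n > 0 \<and> ?b [^]\<^bsub>AG\<^esub> n = \<zero>\<^sub>A"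
    using G.pow_ord_eq_1[of ?b] bA by auto
  then obtain j where "?b [^]\<^bsub>AG\<^esub> (p ^ j) = \<zero>\<^sub>A"
    using assms(5) b unfolding bzero_def by blast
  then show ?thesis
    using G.pow_prime_eq_one[OF assms(4)] bA bl not_dvd by (simp add: bzero_def)
qed

end
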